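(* A circuit $c\in\mathsf{ACirc}$ is realisable if and only if its ports can be partitioned into two sets, called inputs and outputs, such that the denotation of the corresponding rewiring of $c$ is the graph $\{(p,f(p)):p\in k(x)^{|I|}\}$ of a rational affine map $f$ from inputs to outputs.
   Context: Fix a field $k$. Circuits: terms built from generators with sorts $(n,m)$ ($n$ left, $m$ right ports): copier $\Delta:(1,2)$, discard $!:(1,0)$, amplifier $\mathsf{s}_r:(1,1)$ ($r\in k$), register $\mathsf{x}:(1,1)$, adder $+:(2,1)$, zero $0:(0,1)$, one $\mathbf{1}:(0,1)$; mirror images $\Delta^{op}:(2,1)$, $!^{op}:(0,1)$, $\mathsf{s}_r^{op}$, $\mathsf{x}^{op}:(1,1)$, $+^{op}:(1,2)$, $0^{op}:(1,0)$, $\mathbf{1}^{op}:(1,0)$; $\mathrm{id}_0$, $\mathrm{id}_1$, $\mathrm{sw}:(2,2)$; closed under sequential composition $;$ and parallel composition $\oplus$; $\mathsf{ACirc}$ is the resulting prop. Denotation: $k(x)$ is the field of polynomial fractions; $[\![\Delta]\!]=\{(p,(p,p))\}$, $[\![!]\!]=\{(p,\bullet)\}$, $[\![+]\!]=\{((p,q),p+q)\}$, $[\![0]\!]=\{(\bullet,0)\}$, $[\![\mathbf 1]\!]=\{(\bullet,1)\}$, $[\![\mathsf s_r]\!]=\{(p,rp)\}$, $[\![\mathsf x]\!]=\{(p,px)\}$; mirrored generators denote converse relations; structural generators denote identity, swap, $\{(\bullet,\bullet)\}$; $;$ is relational composition, $\oplus$ product of relations. Two circuits are equivalent if they have the same denotation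 (equivalently, are equal in the complete equational theory AIH). Feedback: for $c:(n+1,m+1)$, $\mathrm{Tr}(c):(n,m)$ is obtained by connecting the last right port of $c$ to its last left port through a register $\mathsf x$, the wire being bent with the cup $\eta=!^{op};\Delta:(0,2)$ and the cap $\epsilon=\Delta^{op};!:(2,0)$. $\mathsf{ASF}$ (affine signal flow graphs) is the smallest class of circuits containing $\Delta,!,\mathsf s_r,\mathsf x,+,0,\mathbf 1,\mathrm{id}_0,\mathrm{id}_1,\mathrm{sw}$ and closed under $;$, $\oplus$ and $\mathrm{Tr}$. Rewiring: given $c:(n,m)$ and a partition of its $n+m$ ports into inputs $I$ and outputs $O$, the rewiring of $c$ is the circuit of sort $(|I|,|O|)$ obtained by bending left ports in $O$ to the right with cups $\eta$ and right ports in $I$ to the left with caps $\epsilon$ (with symmetries to reorder); its denotation is the set of pairs (values on $I$, values on $O$) which together form an element of $[\![c]\!]$. $c$ is realisable if for some such partition its rewiring is equivalent to a circuit of $\mathsf{ASF}$. $\mathsf{Rat}\subseteq k(x)$ is the ring of fractions $p/q$ with $q$ having nonzero constant term. An affine map $f:k(x)^a\to k(x)^b$, $f(p)=Ap+b_0$, is rational if $A$ and $b_0$ have all entries in $\mathsf{Rat}$. *)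

theory Defs
  imports "HOL-Computational_Algebra.Polynomial" "HOL-Computational_Algebra.Fraction_Field"
begin

type_synonym 'k kx = "'k poly fract"

definition kconst :: "'k::field \<Rightarrow> 'k kx" where
  "kconst r = Fract [:r:] 1"

definition kX :: "'k::field kx" where
  "kX = Fract [:0, 1:] 1"

text \<open>Generators (left-to-right versions); mirror images are obtained with Op.\<close>
datatype 'k gen = Copy | Disc | Amp 'k | Reg | Add | Zero | One

datatype 'k circ =
    G "'k gen"
  | Op "'k gen"
  | Id0 | Id1 | Sw
  | Seq "'k circ" "'k circ"
  | Par "'k circ" "'k circ"

fun gen_sort :: "'k gen \<Rightarrow> nat \<times> nat" where
  "gen_sort Copy = (1, 2)"
| "gen_sort Disc = (1, 0)"
| "gen_sort (Amp r) = (1, 1)"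
| "gen_sort Reg = (1, 1)"
| "gen_sort Add = (2, 1)"
| "gen_sort Zero = (0, 1)"
| "gen_sort One = (0, 1)"

fun sort_of :: "'k circ \<Rightarrow> (nat \<times> nat) option" where
  "sort_of (G g) = Some (gen_sort g)"
| "sort_of (Op g) = Some (snd (gen_sort g), fst (gen_sort g))"
| "sort_of Id0 = Some (0, 0)"
| "sort_of Id1 = Some (1, 1)"
| "sort_of Sw = Some (2, 2)"
| "sort_of (Seq c d) =
     (case (sort_of c, sort_of d) of
        (Some (n, m), Some (m', l)) \<Rightarrow> (if m = m' then Some (n, l) else None)
      | _ \<Rightarrow> None)"
| "sort_of (Par c d) =
     (case (sort_of c, sort_of d) of
        (Some (n, m), Some (n', m')) \<Rightarrow> Some (n + n', m + m')
      | _ \<Rightarrow> None)"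

definition ACirc :: "'k circ set" where
  "ACirc = {c. sort_of c \<noteq> None}"

fun gen_den :: "'k::field gen \<Rightarrow> ('k kx list \<times> 'k kx list) set" where
  "gen_den Copy = {([p], [p, p]) | p. True}"
| "gen_den Disc = {([p], []) | p. True}"
| "gen_den (Amp r) = {([p], [kconst r * p]) | p. True}"
| "gen_den Reg = {([p], [p * kX]) | p. True}"
| "gen_den Add = {([p, q], [p + q]) | p q. True}"
| "gen_den Zero = {([], [0])}"
| "gen_den One = {([], [1])}"

fun den :: "'k::field circ \<Rightarrow> ('k kx list \<times> 'k kx list) set" where
  "den (G g) = gen_den g"
| "den (Op g) = converse (gen_den g)"
| "den Id0 = {([], [])}"
| "den Id1 = {([p], [p]) | p. True}"
| "den Sw = {([p, q], [q, p]) | p q. True}"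
| "den (Seq c d) = den c O den d"
| "den (Par c d) = {(a @ a', b @ b') | a b a' b'. (a, b) \<in> den c \<and> (a', b') \<in> den d}"

fun ids :: "nat \<Rightarrow> 'k circ" where
  "ids 0 = Id0"
| "ids (Suc n) = Par Id1 (ids n)"

definition cup :: "'k circ" where
  "cup = Seq (Op Disc) (G Copy)"

definition cap :: "'k circ" where
  "cap = Seq (Op Copy) (G Disc)"

text \<open>Feedback Tr(c) for c of sort (n+1, m+1): the last right port of c is fed
  through a register x back into the last left port of c.\<close>
definition trace :: "nat \<Rightarrow> nat \<Rightarrow> 'k circ \<Rightarrow> 'k circ" where
  "trace n m c =
     Seq (Seq (Par (ids n) cup) (Par c Id1))
         (Par (ids m) (Seq (Par (G Reg) Id1) cap))"

inductive_set ASF :: "'k circ set" where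
  asf_gen: "G g \<in> ASF"
| asf_id0: "Id0 \<in> ASF"
| asf_id1: "Id1 \<in> ASF"
| asf_sw: "Sw \<in> ASF"
| asf_seq: "\<lbrakk>c \<in> ASF; d \<in> ASF; sort_of c = Some (n, m); sort_of d = Some (m, l)\<rbrakk>
            \<Longrightarrow> Seq c d \<in> ASF"
| asf_par: "\<lbrakk>c \<in> ASF; d \<in> ASF\<rbrakk> \<Longrightarrow> Par c d \<in> ASF"
| asf_tr: "\<lbrakk>c \<in> ASF; sort_of c = Some (Suc n, Suc m)\<rbrakk> \<Longrightarrow> trace n m c \<in> ASF"

text \<open>Ports of a circuit of sort (n,m): Inl i is the i-th left port, Inr j the j-th right
  port, listed in a canonical order.\<close>
definition port_list :: "nat \<Rightarrow> nat \<Rightarrow> (nat + nat) list" where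
  "port_list n m = map Inl [0..<n] @ map Inr [0..<m]"

definition in_ports :: "nat \<Rightarrow> nat \<Rightarrow> (nat + nat) set \<Rightarrow> (nat + nat) list" where
  "in_ports n m I = filter (\<lambda>p. p \<in> I) (port_list n m)"

definition out_ports :: "nat \<Rightarrow> nat \<Rightarrow> (nat + nat) set \<Rightarrow> (nat + nat) list" where
  "out_ports n m I = filter (\<lambda>p. p \<notin> I) (port_list n m)"

text \<open>Denotation of the rewiring of c (of sort (n,m)) w.r.t. inputs I and outputs the rest:
  pairs (values on I, values on O) which together form an element of [[c]].\<close>
definition rewire_den ::
  "'k::field circ \<Rightarrow> nat \<Rightarrow> nat \<Rightarrow> (nat + nat) set \<Rightarrow> ('k kx list \<times> 'k kx list) set" where
  "rewire_den c n m I =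
     {(map v (in_ports n m I), map v (out_ports n m I)) | v.
        (map (\<lambda>i. v (Inl i)) [0..<n], map (\<lambda>j. v (Inr j)) [0..<m]) \<in> den c}"

definition realisable :: "'k::field circ \<Rightarrow> bool" where
  "realisable c \<longleftrightarrow>
     (\<exists>n m. sort_of c = Some (n, m) \<and>
        (\<exists>I. I \<subseteq> set (port_list n m) \<and>
          (\<exists>d \<in> ASF. sort_of d = Some (length (in_ports n m I), length (out_ports n m I))
                      \<and> den d = rewire_den c n m I)))"

definition RatF :: "'k::field kx set" where
  "RatF = {Fract p q | p q. coeff q 0 \<noteq> 0}"

definition affine_map ::
  "nat \<Rightarrow> nat \<Rightarrow> (nat \<Rightarrow> nat \<Rightarrow> 'k::field kx) \<Rightarrow> (nat \<Rightarrow> 'k kx) \<Rightarrow> 'k kx list \<Rightarrow> 'k kx list" where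
  "affine_map a b A b0 p = map (\<lambda>i. (\<Sum>j<a. A i j * p ! j) + b0 i) [0..<b]"

definition rational_affine :: "nat \<Rightarrow> nat \<Rightarrow> (nat \<Rightarrow> nat \<Rightarrow> 'k::field kx) \<Rightarrow> (nat \<Rightarrow> 'k kx) \<Rightarrow> bool" where
  "rational_affine a b A b0 \<longleftrightarrow> (\<forall>i<b. (\<forall>j<a. A i j \<in> RatF) \<and> b0 i \<in> RatF)"

end

theory Submission
  imports Defs
begin

(* The theorem therefore reduces to: the
   denotations of ASF circuits of sort (a, b) are exactly the graphs of rational affine maps
   k(x)^a -> k(x)^b.

   Soundness is an induction over ASF: such graphs are closed under composition, products and
   feedback. For feedback, the loop equation z = (g + c z) x with c in Rat has the unique
   solution z = x (1 - x c)^-1 g, and 1 - x c is invertible in Rat because its constant term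
   is 1.

   Completeness: multiplication by a polynomial is built from amplifiers, registers, copiers
   and adders; for p/q in Rat write q = q0 (1 - x rho) with q0 a nonzero constant and rho a
   polynomial, so that 1/q is a feedback loop around rho. An affine map is then assembled by
   copying the inputs and summing their scaled copies. *)

section \<open>The subring Rat of k(x)\<close>

lemma RatF_I: "coeff q 0 \<noteq> 0 \<Longrightarrow> Fract p q \<in> RatF"
  unfolding RatF_def by blast

lemma RatF_E:
  assumes "r \<in> RatF"
  obtains p q where "r = Fract p q" "coeff q 0 \<noteq> 0" "q \<noteq> 0"
  using assms unfolding RatF_def by force

lemma RatF_poly: "Fract p 1 \<in> RatF"
  by (rule RatF_I) simp

lemma RatF_0: "0 \<in> RatF"
  unfolding Zero_fract_def by (rule RatF_poly)

lemma RatF_1: "1 \<in> RatF"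
  unfolding One_fract_def by (rule RatF_poly)

lemma RatF_add: "a \<in> RatF \<Longrightarrow> b \<in> RatF \<Longrightarrow> a + b \<in> RatF"
  by (elim RatF_E) (auto intro!: RatF_I simp: coeff_mult_0)

lemma RatF_mult: "a \<in> RatF \<Longrightarrow> b \<in> RatF \<Longrightarrow> a * b \<in> RatF"
  by (elim RatF_E) (auto intro!: RatF_I simp: coeff_mult_0)

lemma RatF_kconst: "kconst r \<in> RatF"
  unfolding kconst_def by (rule RatF_I) simp

lemma RatF_kX: "kX \<in> RatF"
  unfolding kX_def by (rule RatF_I) simp

lemma kconst_mult: "kconst a * kconst b = kconst (a * b)"
  unfolding kconst_def by (simp add: mult.commute)

lemma kconst_1: "kconst 1 = 1"
  unfolding kconst_def by (simp add: pCons_one fract_collapse)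

lemma kconst_uminus: "kconst (- a) = - kconst a"
  unfolding kconst_def by simp

lemma kconst_inverse: "inverse (kconst a) = kconst (inverse a)"
proof (cases "a = 0")
  case True
  then show ?thesis unfolding kconst_def by (simp add: fract_collapse)
next
  case False
  then have "kconst a * kconst (inverse a) = 1" by (simp add: kconst_mult kconst_1)
  then show ?thesis by (rule inverse_unique)
qed

lemma Fract_pCons: "Fract (pCons a p) 1 = kconst a + kX * Fract p 1"
proof -
  have "pCons a p = [:a:] + [:0, 1:] * p" by simp
  then show ?thesis unfolding kconst_def kX_def by simp
qed

text \<open>For \<open>c = p/q \<in> Rat\<close>, \<open>1 - x c = (q - x p)/q\<close> and \<open>q - x p\<close> has the same nonzero
  constant term as \<open>q\<close>.\<close>
lemma one_minus_kX_mult_RatF: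
  assumes "c \<in> RatF"
  shows "1 - kX * c \<noteq> 0" and "inverse (1 - kX * c) \<in> RatF"
proof -
  obtain p q where pq: "c = Fract p q" "coeff q 0 \<noteq> 0" "q \<noteq> 0"
    using assms by (rule RatF_E)
  have eq: "1 - kX * c = Fract (q - [:0, 1:] * p) q"
    using pq by (simp add: kX_def fract_expand)
  have const: "coeff (q - [:0, 1:] * p) 0 = coeff q 0" by simp
  then have "q - [:0, 1:] * p \<noteq> 0" using pq by auto
  then show "1 - kX * c \<noteq> 0" unfolding eq using pq by (simp add: eq_fract fract_expand)
  show "inverse (1 - kX * c) \<in> RatF" unfolding eq using const pq by (auto intro!: RatF_I)
qed

lemma feedback_equation_iff:
  fixes c g z :: "'k::field kx"
  assumes "c \<in> RatF"
  shows "z = (g + c * z) * kX \<longleftrightarrow> z = kX * inverse (1 - kX * c) * g"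
  using one_minus_kX_mult_RatF(1)[OF assms] by (auto simp: field_simps)

section \<open>Rational affine maps\<close>

definition rat_affine_form :: "nat \<Rightarrow> ('k::field kx list \<Rightarrow> 'k kx) \<Rightarrow> bool" where
  "rat_affine_form a f \<longleftrightarrow> (\<exists>c d. (\<forall>j<a. c j \<in> RatF) \<and> d \<in> RatF \<and>
      (\<forall>p. length p = a \<longrightarrow> f p = (\<Sum>j<a. c j * p ! j) + d))"

lemma rat_affine_form_cong:
  "rat_affine_form a f \<Longrightarrow> (\<And>p. length p = a \<Longrightarrow> f p = g p) \<Longrightarrow> rat_affine_form a g"
  unfolding rat_affine_form_def by metis

lemma rat_affine_form_const: "r \<in> RatF \<Longrightarrow> rat_affine_form a (\<lambda>p. r)"
  unfolding rat_affine_form_def by (intro exI[of _ "\<lambda>j. 0"] exI[of _ r]) (auto intro: RatF_0)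

lemma rat_affine_form_nth:
  assumes "i < a"
  shows "rat_affine_form a (\<lambda>p. p ! i)"
  unfolding rat_affine_form_def
  using assms by (intro exI[of _ "\<lambda>j. of_bool (j = i)"] exI[of _ 0]) (auto simp: RatF_0 RatF_1)

lemma rat_affine_form_add:
  assumes "rat_affine_form a f" "rat_affine_form a g"
  shows "rat_affine_form a (\<lambda>p. f p + g p)"
proof -
  from assms obtain c d c' d' where
    "(\<forall>j<a. c j \<in> RatF) \<and> d \<in> RatF \<and> (\<forall>p. length p = a \<longrightarrow> f p = (\<Sum>j<a. c j * p ! j) + d)"
    "(\<forall>j<a. c' j \<in> RatF) \<and> d' \<in> RatF \<and> (\<forall>p. length p = a \<longrightarrow> g p = (\<Sum>j<a. c' j * p ! j) + d')"
    unfolding rat_affine_form_def by blast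
  then show ?thesis unfolding rat_affine_form_def
    by (intro exI[of _ "\<lambda>j. c j + c' j"] exI[of _ "d + d'"])
       (auto intro: RatF_add simp: sum.distrib algebra_simps)
qed

lemma rat_affine_form_scale:
  assumes "r \<in> RatF" "rat_affine_form a f"
  shows "rat_affine_form a (\<lambda>p. r * f p)"
proof -
  from assms obtain c d where
    "(\<forall>j<a. c j \<in> RatF) \<and> d \<in> RatF \<and> (\<forall>p. length p = a \<longrightarrow> f p = (\<Sum>j<a. c j * p ! j) + d)"
    unfolding rat_affine_form_def by blast
  then show ?thesis unfolding rat_affine_form_def using assms(1)
    by (intro exI[of _ "\<lambda>j. r * c j"] exI[of _ "r * d"])
       (auto intro: RatF_mult simp: sum_distrib_left algebra_simps)
qed

lemma rat_affine_form_sum: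
  "(\<And>i. i \<in> A \<Longrightarrow> rat_affine_form a (f i)) \<Longrightarrow> rat_affine_form a (\<lambda>p. \<Sum>i\<in>A. f i p)"
  by (induct A rule: infinite_finite_induct) (auto intro: rat_affine_form_add rat_affine_form_const RatF_0)

lemma rat_affine_form_comp:
  assumes f: "rat_affine_form m f"
    and H: "\<And>j. j < m \<Longrightarrow> rat_affine_form n (\<lambda>p. H p ! j)"
    and len: "\<And>p. length p = n \<Longrightarrow> length (H p) = m"
  shows "rat_affine_form n (\<lambda>p. f (H p))"
proof -
  from f obtain c d where c: "\<forall>j<m. c j \<in> RatF" "d \<in> RatF"
    and fd: "\<forall>p. length p = m \<longrightarrow> f p = (\<Sum>j<m. c j * p ! j) + d"
    unfolding rat_affine_form_def by blast
  have "rat_affine_form n (\<lambda>p. (\<Sum>j<m. c j * H p ! j) + d)"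
    using c H by (intro rat_affine_form_add rat_affine_form_sum rat_affine_form_const rat_affine_form_scale) auto
  then show ?thesis by (rule rat_affine_form_cong) (simp add: fd len)
qed

lemma rat_affine_form_snoc:
  assumes "rat_affine_form (Suc n) f"
  obtains g c where "rat_affine_form n g" "c \<in> RatF"
    "\<And>a z. length a = n \<Longrightarrow> f (a @ [z]) = g a + c * z"
proof -
  from assms obtain c d where c: "\<forall>j<Suc n. c j \<in> RatF" "d \<in> RatF"
    and fd: "\<forall>p. length p = Suc n \<longrightarrow> f p = (\<Sum>j<Suc n. c j * p ! j) + d"
    unfolding rat_affine_form_def by blast
  have "rat_affine_form n (\<lambda>a. (\<Sum>j<n. c j * a ! j) + d)"
    unfolding rat_affine_form_def using c by (intro exI[of _ c] exI[of _ d]) auto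
  moreover have "\<And>a z. length a = n \<Longrightarrow> f (a @ [z]) = (\<Sum>j<n. c j * a ! j) + d + c n * z"
    using fd by (auto simp: nth_append)
  ultimately show ?thesis using c that by blast
qed

definition rat_affine_fun :: "nat \<Rightarrow> nat \<Rightarrow> ('k::field kx list \<Rightarrow> 'k kx list) \<Rightarrow> bool" where
  "rat_affine_fun a b F \<longleftrightarrow>
     (\<forall>p. length p = a \<longrightarrow> length (F p) = b) \<and> (\<forall>i<b. rat_affine_form a (\<lambda>p. F p ! i))"

lemma rat_affine_fun_length: "rat_affine_fun a b F \<Longrightarrow> length p = a \<Longrightarrow> length (F p) = b"
  unfolding rat_affine_fun_def by blast

lemma rat_affine_fun_Nil: "rat_affine_fun a 0 (\<lambda>p. [])"
  unfolding rat_affine_fun_def by simp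

lemma rat_affine_fun_Cons:
  "rat_affine_form a f \<Longrightarrow> rat_affine_fun a b F \<Longrightarrow> rat_affine_fun a (Suc b) (\<lambda>p. f p # F p)"
  unfolding rat_affine_fun_def by (auto simp: less_Suc_eq_0_disj)

lemma rat_affine_fun_id: "rat_affine_fun a a (\<lambda>p. p)"
  unfolding rat_affine_fun_def by (simp add: rat_affine_form_nth)

lemma rat_affine_fun_comp:
  assumes F: "rat_affine_fun n m F" and K: "rat_affine_fun m l K"
  shows "rat_affine_fun n l (\<lambda>p. K (F p))"
  unfolding rat_affine_fun_def
proof (intro conjI allI impI)
  fix p :: "'a kx list"
  assume "length p = n"
  then show "length (K (F p)) = l" using F K by (simp add: rat_affine_fun_length)
next
  fix i assume "i < l"
  then have "rat_affine_form m (\<lambda>q. K q ! i)" using K unfolding rat_affine_fun_def by blast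
  then show "rat_affine_form n (\<lambda>p. K (F p) ! i)"
    by (rule rat_affine_form_comp) (use F in \<open>auto simp: rat_affine_fun_def\<close>)
qed

lemma rat_affine_fun_append:
  assumes F: "rat_affine_fun n1 m1 F" and K: "rat_affine_fun n2 m2 K"
  shows "rat_affine_fun (n1 + n2) (m1 + m2) (\<lambda>p. F (take n1 p) @ K (drop n1 p))"
  unfolding rat_affine_fun_def
proof (intro conjI allI impI)
  fix p :: "'a kx list"
  assume "length p = n1 + n2"
  then show "length (F (take n1 p) @ K (drop n1 p)) = m1 + m2"
    using F K by (simp add: rat_affine_fun_length)
next
  have take: "rat_affine_form (n1 + n2) (\<lambda>p. f (take n1 p))" if "rat_affine_form n1 f" for f
    using that by (rule rat_affine_form_comp) (auto intro: rat_affine_form_nth)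
  have drop: "rat_affine_form (n1 + n2) (\<lambda>p. f (drop n1 p))" if "rat_affine_form n2 f" for f
    using that by (rule rat_affine_form_comp)
      (auto intro: rat_affine_form_cong[OF rat_affine_form_nth[of "n1 + _"]])
  fix i assume i: "i < m1 + m2"
  show "rat_affine_form (n1 + n2) (\<lambda>p. (F (take n1 p) @ K (drop n1 p)) ! i)"
  proof (cases "i < m1")
    case True
    with F have "rat_affine_form n1 (\<lambda>q. F q ! i)" unfolding rat_affine_fun_def by blast
    from take[OF this] show ?thesis
      by (rule rat_affine_form_cong) (use F True in \<open>simp add: rat_affine_fun_length nth_append\<close>)
  next
    case False
    with i K have "rat_affine_form n2 (\<lambda>q. K q ! (i - m1))" unfolding rat_affine_fun_def by simp
    from drop[OF this] show ?thesis
      by (rule rat_affine_form_cong) (use F False in \<open>simp add: rat_affine_fun_length nth_append\<close>)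
  qed
qed

lemma rat_affine_fun_snoc:
  assumes "rat_affine_form n Z"
  shows "rat_affine_fun n (Suc n) (\<lambda>a. a @ [Z a])"
  unfolding rat_affine_fun_def
proof (intro conjI allI impI)
  fix i assume "i < Suc n"
  then consider "i < n" | "i = n" by linarith
  then show "rat_affine_form n (\<lambda>a. (a @ [Z a]) ! i)"
  proof cases
    case 1
    then show ?thesis
      by (rule rat_affine_form_cong[OF rat_affine_form_nth]) (simp add: nth_append 1)
  next
    case 2
    show ?thesis using assms by (rule rat_affine_form_cong) (simp add: nth_append 2)
  qed
qed simp

lemma rat_affine_fun_butlast: "rat_affine_fun (Suc m) m butlast"
  unfolding rat_affine_fun_def
proof (intro conjI allI impI)
  fix i assume "i < m"
  then show "rat_affine_form (Suc m) (\<lambda>p. butlast p ! i)"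
    by (intro rat_affine_form_cong[OF rat_affine_form_nth[of i]]) (simp_all add: nth_butlast)
qed simp

lemma rat_affine_fun_feedback:
  assumes F: "rat_affine_fun (Suc n) (Suc m) F"
  obtains Z where "rat_affine_form n Z"
    and "\<And>a z. length a = n \<Longrightarrow> z = last (F (a @ [z])) * kX \<longleftrightarrow> z = Z a"
proof -
  from F have "rat_affine_form (Suc n) (\<lambda>q. F q ! m)" unfolding rat_affine_fun_def by blast
  then obtain g c where g: "rat_affine_form n g" and c: "c \<in> RatF"
    and gc: "\<And>a z. length a = n \<Longrightarrow> F (a @ [z]) ! m = g a + c * z"
    using rat_affine_form_snoc by blast
  define Z where "Z a = kX * inverse (1 - kX * c) * g a" for a
  have "rat_affine_form n Z"
    unfolding Z_def using c g by (intro rat_affine_form_scale RatF_mult RatF_kX one_minus_kX_mult_RatF(2))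
  moreover have "z = last (F (a @ [z])) * kX \<longleftrightarrow> z = Z a" if a: "length a = n" for a z
  proof -
    have "length (F (a @ [z])) = Suc m" using rat_affine_fun_length[OF F] a by simp
    then have "last (F (a @ [z])) = F (a @ [z]) ! m"
      by (cases "F (a @ [z])" rule: rev_cases) auto
    then have "last (F (a @ [z])) = g a + c * z" using gc[OF a] by simp
    then show ?thesis unfolding Z_def using feedback_equation_iff[OF c] by simp
  qed
  ultimately show ?thesis using that by blast
qed

lemma rat_affine_fun_affine_map:
  assumes "rat_affine_fun a b F"
  obtains A b0 where "rational_affine a b A b0" "\<And>p. length p = a \<Longrightarrow> F p = affine_map a b A b0 p"
proof -
  from assms have "\<forall>i<b. \<exists>c d. (\<forall>j<a. c j \<in> RatF) \<and> d \<in> RatF \<and>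
      (\<forall>p. length p = a \<longrightarrow> F p ! i = (\<Sum>j<a. c j * p ! j) + d)"
    unfolding rat_affine_fun_def rat_affine_form_def by blast
  then obtain A b0 where A: "\<forall>i<b. (\<forall>j<a. A i j \<in> RatF) \<and> b0 i \<in> RatF \<and>
      (\<forall>p. length p = a \<longrightarrow> F p ! i = (\<Sum>j<a. A i j * p ! j) + b0 i)"
    by metis
  then have "rational_affine a b A b0" unfolding rational_affine_def by blast
  moreover have "F p = affine_map a b A b0 p" if "length p = a" for p
    using A that rat_affine_fun_length[OF assms that]
    by (intro nth_equalityI) (simp_all add: affine_map_def)
  ultimately show ?thesis using that by blast
qed

definition graph_of :: "nat \<Rightarrow> ('k kx list \<Rightarrow> 'k kx list) \<Rightarrow> ('k kx list \<times> 'k kx list) set" where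
  "graph_of a F = {(p, F p) | p. length p = a}"

lemma graph_of_cong: "(\<And>p. length p = a \<Longrightarrow> F p = K p) \<Longrightarrow> graph_of a F = graph_of a K"
  unfolding graph_of_def by auto

lemma graph_of_relcomp:
  "(\<And>p. length p = n \<Longrightarrow> length (F p) = m) \<Longrightarrow>
     graph_of n F O graph_of m K = graph_of n (\<lambda>p. K (F p))"
  unfolding graph_of_def by auto

lemma graph_of_append:
  "{(a @ a', b @ b') | a b a' b'. (a, b) \<in> graph_of n1 F \<and> (a', b') \<in> graph_of n2 K}
     = graph_of (n1 + n2) (\<lambda>p. F (take n1 p) @ K (drop n1 p))"
  (is "?L = ?R")
proof
  show "?L \<subseteq> ?R" unfolding graph_of_def by auto
  show "?R \<subseteq> ?L"
  proof
    fix x assume "x \<in> ?R"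
    then obtain p where x: "x = (take n1 p @ drop n1 p, F (take n1 p) @ K (drop n1 p))"
      and "length p = n1 + n2"
      unfolding graph_of_def by auto
    then have "(take n1 p, F (take n1 p)) \<in> graph_of n1 F"
      and "(drop n1 p, K (drop n1 p)) \<in> graph_of n2 K"
      unfolding graph_of_def by auto
    with x show "x \<in> ?L" by blast
  qed
qed

lemma graph_of_feedback:
  assumes len: "\<And>q. length q = Suc n \<Longrightarrow> length (F q) = Suc m"
    and Z: "\<And>a z. length a = n \<Longrightarrow> z = last (F (a @ [z])) * kX \<longleftrightarrow> z = Z a"
  shows "{(a, b) | a b z w. (a @ [z], b @ [w]) \<in> graph_of (Suc n) F \<and> z = w * kX}
       = graph_of n (\<lambda>a. butlast (F (a @ [Z a])))" (is "?L = ?R")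
proof (intro set_eqI iffI)
  fix x assume "x \<in> ?L"
  then obtain a b z w where x: "x = (a, b)" and "(a @ [z], b @ [w]) \<in> graph_of (Suc n) F"
    and z: "z = w * kX"
    by blast
  then have a: "length a = n" and F: "F (a @ [z]) = b @ [w]"
    by (auto simp: graph_of_def)
  with Z[OF a, of z] z have "z = Z a" by simp
  with F x a show "x \<in> ?R" unfolding graph_of_def by auto
next
  fix x assume "x \<in> ?R"
  then obtain a where x: "x = (a, butlast (F (a @ [Z a])))" and a: "length a = n"
    unfolding graph_of_def by auto
  define w where "w = last (F (a @ [Z a]))"
  have "F (a @ [Z a]) \<noteq> []" using len[of "a @ [Z a]"] a by auto
  then have "(a @ [Z a], butlast (F (a @ [Z a])) @ [w]) \<in> graph_of (Suc n) F"
    unfolding graph_of_def w_def using a by simp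
  moreover have "Z a = w * kX" unfolding w_def using Z[OF a, of "Z a"] by simp
  ultimately show "x \<in> ?L" unfolding x by blast
qed

definition rat_affine_rel :: "nat \<Rightarrow> nat \<Rightarrow> ('k::field kx list \<times> 'k kx list) set \<Rightarrow> bool" where
  "rat_affine_rel a b R \<longleftrightarrow> (\<exists>F. rat_affine_fun a b F \<and> R = graph_of a F)"

lemma rat_affine_relI: "rat_affine_fun a b F \<Longrightarrow> rat_affine_rel a b (graph_of a F)"
  unfolding rat_affine_rel_def by blast

lemma rat_affine_rel_relcomp:
  assumes "rat_affine_rel n m R" "rat_affine_rel m l S"
  shows "rat_affine_rel n l (R O S)"
proof -
  from assms obtain F K where "rat_affine_fun n m F" "rat_affine_fun m l K"
    and "R = graph_of n F" "S = graph_of m K"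
    unfolding rat_affine_rel_def by blast
  then show ?thesis
    by (simp add: graph_of_relcomp rat_affine_fun_length rat_affine_relI rat_affine_fun_comp)
qed

lemma rat_affine_rel_append:
  assumes "rat_affine_rel n1 m1 R" "rat_affine_rel n2 m2 S"
  shows "rat_affine_rel (n1 + n2) (m1 + m2)
    {(a @ a', b @ b') | a b a' b'. (a, b) \<in> R \<and> (a', b') \<in> S}"
proof -
  from assms obtain F K where "rat_affine_fun n1 m1 F" "rat_affine_fun n2 m2 K"
    and "R = graph_of n1 F" "S = graph_of n2 K"
    unfolding rat_affine_rel_def by blast
  then show ?thesis
    by (simp add: graph_of_append rat_affine_relI rat_affine_fun_append)
qed

lemma rat_affine_rel_feedback:
  assumes "rat_affine_rel (Suc n) (Suc m) R"
  shows "rat_affine_rel n m {(a, b) | a b z w. (a @ [z], b @ [w]) \<in> R \<and> z = w * kX}"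
proof -
  from assms obtain F where F: "rat_affine_fun (Suc n) (Suc m) F" and R: "R = graph_of (Suc n) F"
    unfolding rat_affine_rel_def by blast
  obtain Z where "rat_affine_form n Z"
    and Z: "\<And>a z. length a = n \<Longrightarrow> z = last (F (a @ [z])) * kX \<longleftrightarrow> z = Z a"
    using rat_affine_fun_feedback[OF F] by blast
  from \<open>rat_affine_form n Z\<close> have "rat_affine_fun n (Suc n) (\<lambda>a. a @ [Z a])"
    by (rule rat_affine_fun_snoc)
  then have "rat_affine_fun n (Suc m) (\<lambda>a. F (a @ [Z a]))" using F by (rule rat_affine_fun_comp)
  then have "rat_affine_fun n m (\<lambda>a. butlast (F (a @ [Z a])))"
    using rat_affine_fun_butlast by (rule rat_affine_fun_comp)
  moreover have "{(a, b) | a b z w. (a @ [z], b @ [w]) \<in> R \<and> z = w * kX}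
      = graph_of n (\<lambda>a. butlast (F (a @ [Z a])))"
    unfolding R by (rule graph_of_feedback[OF rat_affine_fun_length[OF F] Z])
  ultimately show ?thesis by (simp add: rat_affine_relI)
qed

section \<open>Denotations of circuits\<close>

lemma gen_den_length:
  "(u, v) \<in> gen_den g \<Longrightarrow> length u = fst (gen_sort g) \<and> length v = snd (gen_sort g)"
  by (cases g) auto

lemma sort_of_Par_SomeE:
  assumes "sort_of (Par c d) = Some (n, m)"
  obtains n1 m1 n2 m2 where "sort_of c = Some (n1, m1)" "sort_of d = Some (n2, m2)"
    "n = n1 + n2" "m = m1 + m2"
  using assms that by (auto split: option.splits)

lemma den_length:
  "sort_of c = Some (n, m) \<Longrightarrow> (u, v) \<in> den c \<Longrightarrow> length u = n \<and> length v = m"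
proof (induct c arbitrary: n m u v)
  case (G g)
  then show ?case using gen_den_length[of u v g] by auto
next
  case (Op g)
  then show ?case using gen_den_length[of v u g] by auto
next
  case (Seq c d)
  then show ?case by (auto split: option.splits if_splits)
next
  case (Par c d)
  from Par.prems(1) obtain n1 m1 n2 m2 where "sort_of c = Some (n1, m1)" "sort_of d = Some (n2, m2)"
    "n = n1 + n2" "m = m1 + m2"
    by (rule sort_of_Par_SomeE)
  with Par show ?case by fastforce
qed auto

lemma den_Par_memI: "(a, b) \<in> den c \<Longrightarrow> (a', b') \<in> den d \<Longrightarrow> (a @ a', b @ b') \<in> den (Par c d)"
  by auto

lemma den_basic:
  "gen_den Copy = graph_of 1 (\<lambda>p. [p ! 0, p ! 0])"
  "gen_den Disc = graph_of 1 (\<lambda>p. [])"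
  "gen_den (Amp r) = graph_of 1 (\<lambda>p. [kconst r * p ! 0])"
  "gen_den Reg = graph_of 1 (\<lambda>p. [kX * p ! 0])"
  "gen_den Add = graph_of 2 (\<lambda>p. [p ! 0 + p ! 1])"
  "gen_den Zero = graph_of 0 (\<lambda>p. [0])"
  "gen_den One = graph_of 0 (\<lambda>p. [1])"
  "den Id0 = graph_of 0 (\<lambda>p. [])"
  "den Id1 = graph_of 1 (\<lambda>p. p)"
  "den Sw = graph_of 2 (\<lambda>p. [p ! 1, p ! 0])"
  by (auto simp: graph_of_def length_Suc_conv numeral_2_eq_2 mult.commute)

lemma sort_of_ids: "sort_of (ids n) = Some (n, n)"
  by (induct n) auto

lemma den_ids: "den (ids n :: 'k::field circ) = graph_of n (\<lambda>p. p)"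
proof (induct n)
  case 0
  then show ?case by (auto simp: graph_of_def)
next
  case (Suc n)
  have "den (ids (Suc n) :: 'k circ) =
      {(a @ a', b @ b') | a b a' b'. (a, b) \<in> graph_of 1 (\<lambda>p. p) \<and> (a', b') \<in> graph_of n (\<lambda>p. p)}"
    using Suc.hyps by (simp del: den.simps(4) add: den_basic(9))
  also have "\<dots> = graph_of (Suc n) (\<lambda>p. p)"
    by (simp add: graph_of_append)
  finally show ?case .
qed

lemma den_cup: "den cup = {([], [z, z]) | z. True}"
  unfolding cup_def by auto

lemma den_cap: "den cap = {([z, z], []) | z. True}"
  unfolding cap_def by auto

lemma sort_of_trace: "sort_of c = Some (Suc n, Suc m) \<Longrightarrow> sort_of (trace n m c) = Some (n, m)"
  by (simp add: trace_def sort_of_ids cup_def cap_def)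

lemma den_trace_pieces:
  fixes n m :: nat
  shows "den (Par (ids n) cup :: 'k::field circ) = {(a, a @ [z, z]) | a z. length a = n}" (is ?bend)
    "den (Par (ids m) (Seq (Par (G Reg) Id1) cap) :: 'k circ) =
      {(b @ [w, w * kX], b) | b w. length b = m}" (is ?loop)
proof -
  show ?bend
  proof (intro set_eqI iffI)
    fix x :: "'k kx list \<times> 'k kx list"
    assume "x \<in> {(a, a @ [z, z]) | a z. length a = n}"
    then obtain a z where "x = (a @ [], a @ [z, z])" "length a = n" by auto
    then show "x \<in> den (Par (ids n) cup)"
      by (auto intro!: den_Par_memI simp: den_ids graph_of_def den_cup)
  qed (auto simp: den_ids graph_of_def den_cup)
  have reg: "den (Par (G Reg) Id1 :: 'k circ) = {([p, q], [p * kX, q]) | p q. True}"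
  proof (intro set_eqI iffI)
    fix x :: "'k kx list \<times> 'k kx list"
    assume "x \<in> {([p, q], [p * kX, q]) | p q. True}"
    then obtain p q where x: "x = ([p] @ [q], [p * kX] @ [q])" by auto
    have "([p] @ [q], [p * kX] @ [q]) \<in> den (Par (G Reg) Id1)" by (rule den_Par_memI) auto
    then show "x \<in> den (Par (G Reg) Id1)" unfolding x .
  qed auto
  then have ring: "den (Seq (Par (G Reg) Id1) cap :: 'k circ) = {([w, w * kX], []) | w. True}"
    by (auto simp: den_cap)
  show ?loop
  proof (intro set_eqI iffI)
    fix x :: "'k kx list \<times> 'k kx list"
    assume "x \<in> {(b @ [w, w * kX], b) | b w. length b = m}"
    then obtain b w where x: "x = (b @ [w, w * kX], b @ [])" and "length b = m" by auto
    moreover have "([w, w * kX], []) \<in> den (Seq (Par (G Reg) Id1) cap)"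
      unfolding ring by blast
    ultimately have "(b @ [w, w * kX], b @ []) \<in> den (Par (ids m) (Seq (Par (G Reg) Id1) cap))"
      by (intro den_Par_memI) (auto simp: den_ids graph_of_def)
    then show "x \<in> den (Par (ids m) (Seq (Par (G Reg) Id1) cap))" unfolding x .
  qed (auto simp: den_ids graph_of_def den_cap)
qed

lemma den_trace:
  assumes c: "sort_of c = Some (Suc n, Suc m)"
  shows "den (trace n m c) = {(a, b) | a b z w. (a @ [z], b @ [w]) \<in> den c \<and> z = w * kX}"
proof (intro set_eqI iffI)
  fix x assume "x \<in> den (trace n m c)"
  then obtain a b y1 y2 where x: "x = (a, b)" and "(a, y1) \<in> den (Par (ids n) cup)"
    and "(y1, y2) \<in> den (Par c Id1)" and "(y2, b) \<in> den (Par (ids m) (Seq (Par (G Reg) Id1) cap))"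
    unfolding trace_def den.simps(6) by blast
  then obtain z w u v t where y1: "y1 = a @ [z, z]" "y1 = u @ [t]"
    and y2: "y2 = b @ [w, w * kX]" "y2 = v @ [t]" and uv: "(u, v) \<in> den c"
    unfolding den_trace_pieces by auto
  from y1 y2 have "u = a @ [z]" "v = b @ [w]" "z = w * kX" by auto
  with uv x show "x \<in> {(a, b) | a b z w. (a @ [z], b @ [w]) \<in> den c \<and> z = w * kX}" by blast
next
  fix x assume "x \<in> {(a, b) | a b z w. (a @ [z], b @ [w]) \<in> den c \<and> z = w * kX}"
  then obtain a b w where x: "x = (a, b)" and ab: "(a @ [w * kX], b @ [w]) \<in> den c" by blast
  from den_length[OF c ab] have "length a = n" "length b = m" by simp_all
  then have "(a, a @ [w * kX, w * kX]) \<in> den (Par (ids n) cup)"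
    "(b @ [w, w * kX], b) \<in> den (Par (ids m) (Seq (Par (G Reg) Id1) cap))"
    unfolding den_trace_pieces by blast+
  moreover have "(a @ [w * kX, w * kX], b @ [w, w * kX]) \<in> den (Par c Id1)"
    using den_Par_memI[OF ab, of "[w * kX]" "[w * kX]" Id1] by simp
  ultimately show "x \<in> den (trace n m c)" unfolding x trace_def den.simps(6) by blast
qed

section \<open>Soundness\<close>

theorem ASF_den_rat_affine_rel:
  assumes "c \<in> ASF" and "sort_of c = Some (a, b)"
  shows "rat_affine_rel a b (den c)"
  using assms
proof (induct arbitrary: a b rule: ASF.induct)
  case (asf_gen g)
  then show ?case
    by (cases g) (auto simp del: gen_den.simps simp: den_basic numeral_2_eq_2
        intro!: rat_affine_relI rat_affine_fun_Cons rat_affine_fun_Nil rat_affine_form_nth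
          rat_affine_form_add rat_affine_form_scale rat_affine_form_const
          RatF_kconst RatF_kX RatF_0 RatF_1)
next
  case asf_id0
  then show ?case by (auto simp del: den.simps simp: den_basic intro!: rat_affine_relI rat_affine_fun_Nil)
next
  case asf_id1
  then show ?case by (auto simp del: den.simps simp: den_basic intro!: rat_affine_relI rat_affine_fun_id)
next
  case asf_sw
  then show ?case
    by (auto simp del: den.simps simp: den_basic numeral_2_eq_2
        intro!: rat_affine_relI rat_affine_fun_Cons rat_affine_fun_Nil rat_affine_form_nth)
next
  case (asf_seq c d n m l)
  then show ?case by (auto intro: rat_affine_rel_relcomp)
next
  case (asf_par c d)
  from asf_par.prems obtain n1 m1 n2 m2 where "sort_of c = Some (n1, m1)" "sort_of d = Some (n2, m2)"
    "a = n1 + n2" "b = m1 + m2"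
    by (rule sort_of_Par_SomeE)
  with asf_par.hyps show ?case by (auto intro: rat_affine_rel_append)
next
  case (asf_tr c n m)
  from asf_tr.prems asf_tr.hyps(3) have "a = n" "b = m" by (simp_all add: sort_of_trace)
  from asf_tr.hyps(2)[OF asf_tr.hyps(3)] show ?case
    unfolding \<open>a = n\<close> \<open>b = m\<close> den_trace[OF asf_tr.hyps(3)] by (rule rat_affine_rel_feedback)
qed

section \<open>Completeness\<close>

definition ASF_computes :: "nat \<Rightarrow> nat \<Rightarrow> ('k::field kx list \<Rightarrow> 'k kx list) \<Rightarrow> bool" where
  "ASF_computes a b F \<longleftrightarrow> (\<exists>c\<in>ASF. sort_of c = Some (a, b) \<and> den c = graph_of a F)"

lemma ASF_computesI:
  "c \<in> ASF \<Longrightarrow> sort_of c = Some (a, b) \<Longrightarrow> den c = graph_of a F \<Longrightarrow> ASF_computes a b F"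
  unfolding ASF_computes_def by blast

lemma ASF_computes_length:
  assumes "ASF_computes a b F" "length p = a"
  shows "length (F p) = b"
proof -
  from assms(1) obtain c where "sort_of c = Some (a, b)" "den c = graph_of a F"
    unfolding ASF_computes_def by blast
  with assms(2) show ?thesis using den_length[of c a b p "F p"] by (simp add: graph_of_def)
qed

lemma ASF_computes_cong:
  "ASF_computes a b F \<Longrightarrow> (\<And>p. length p = a \<Longrightarrow> F p = K p) \<Longrightarrow> ASF_computes a b K"
  unfolding ASF_computes_def by (metis graph_of_cong)

lemma ASF_computes_seq:
  assumes F: "ASF_computes n m F" and K: "ASF_computes m l K"
    and L: "\<And>p. length p = n \<Longrightarrow> K (F p) = L p"
  shows "ASF_computes n l L"
proof -
  from F K obtain c d where c: "c \<in> ASF" "sort_of c = Some (n, m)" "den c = graph_of n F"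
    and d: "d \<in> ASF" "sort_of d = Some (m, l)" "den d = graph_of m K"
    unfolding ASF_computes_def by blast
  have "den (Seq c d) = graph_of n L"
    using c(3) d(3) graph_of_relcomp[OF ASF_computes_length[OF F]] graph_of_cong[OF L] by simp
  with c d show ?thesis by (intro ASF_computesI[of "Seq c d"]) (auto intro: ASF.asf_seq)
qed

lemma ASF_computes_par:
  assumes F: "ASF_computes n1 m1 F" and K: "ASF_computes n2 m2 K"
    and L: "\<And>p. length p = n \<Longrightarrow> F (take n1 p) @ K (drop n1 p) = L p"
    and "n = n1 + n2" "m = m1 + m2"
  shows "ASF_computes n m L"
proof -
  from F K obtain c d where c: "c \<in> ASF" "sort_of c = Some (n1, m1)" "den c = graph_of n1 F"
    and d: "d \<in> ASF" "sort_of d = Some (n2, m2)" "den d = graph_of n2 K"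
    unfolding ASF_computes_def by blast
  have "den (Par c d) = graph_of n L"
    using c(3) d(3) graph_of_append[of n1 F n2 K] graph_of_cong[OF L] \<open>n = n1 + n2\<close> by simp
  with c d \<open>m = m1 + m2\<close> \<open>n = n1 + n2\<close> show ?thesis
    by (intro ASF_computesI[of "Par c d"]) (auto intro: ASF.asf_par)
qed

lemma ASF_computes_feedback:
  assumes F: "ASF_computes (Suc n) (Suc m) F"
    and Z: "\<And>a z. length a = n \<Longrightarrow> z = last (F (a @ [z])) * kX \<longleftrightarrow> z = Z a"
    and L: "\<And>a. length a = n \<Longrightarrow> butlast (F (a @ [Z a])) = L a"
  shows "ASF_computes n m L"
proof -
  from F obtain c where c: "c \<in> ASF" "sort_of c = Some (Suc n, Suc m)" "den c = graph_of (Suc n) F"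
    unfolding ASF_computes_def by blast
  have "den (trace n m c) = graph_of n (\<lambda>a. butlast (F (a @ [Z a])))"
    unfolding den_trace[OF c(2)] c(3) by (rule graph_of_feedback[OF ASF_computes_length[OF F] Z])
  also have "\<dots> = graph_of n L" using L by (rule graph_of_cong)
  finally have "den (trace n m c) = graph_of n L" .
  with c show ?thesis by (intro ASF_computesI[of "trace n m c"]) (auto intro: ASF.asf_tr sort_of_trace)
qed

lemma ASF_computes_ids: "ASF_computes n n (\<lambda>p. p)"
proof (rule ASF_computesI)
  show "ids n \<in> ASF" by (induct n) (auto intro: ASF.intros)
qed (simp_all add: sort_of_ids den_ids)

lemma ASF_computes_basic:
  "ASF_computes 1 2 (\<lambda>p. [p ! 0, p ! 0])"
  "ASF_computes 1 0 (\<lambda>p. [])"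
  "ASF_computes 1 1 (\<lambda>p. [kconst r * p ! 0])"
  "ASF_computes 1 1 (\<lambda>p. [kX * p ! 0])"
  "ASF_computes 2 1 (\<lambda>p. [p ! 0 + p ! 1])"
  "ASF_computes 0 1 (\<lambda>p. [1])"
  "ASF_computes 0 0 (\<lambda>p. [])"
  "ASF_computes 1 1 (\<lambda>p. p)"
  "ASF_computes 2 2 (\<lambda>p. [p ! 1, p ! 0])"
  by (rule ASF_computesI[of "G Copy"] ASF_computesI[of "G Disc"] ASF_computesI[of "G (Amp r)"]
      ASF_computesI[of "G Reg"] ASF_computesI[of "G Add"] ASF_computesI[of "G One"]
      ASF_computesI[of Id0] ASF_computesI[of Id1] ASF_computesI[of Sw];
      simp del: gen_den.simps den.simps(3-5) add: den_basic ASF.intros)+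

definition ASF_scalar :: "'k::field kx \<Rightarrow> bool" where
  "ASF_scalar r \<longleftrightarrow> ASF_computes 1 1 (\<lambda>p. [r * p ! 0])"

lemma ASF_scalar_kconst: "ASF_scalar (kconst r)"
  unfolding ASF_scalar_def by (rule ASF_computes_basic)

lemma ASF_scalar_kX: "ASF_scalar kX"
  unfolding ASF_scalar_def by (rule ASF_computes_basic)

lemma ASF_scalar_mult:
  assumes "ASF_scalar r" "ASF_scalar s"
  shows "ASF_scalar (r * s)"
  using ASF_computes_seq[OF assms[unfolded ASF_scalar_def]]
  unfolding ASF_scalar_def by (simp add: algebra_simps)

lemma ASF_scalar_add:
  assumes r: "ASF_scalar r" and s: "ASF_scalar s"
  shows "ASF_scalar (r + s)"
proof -
  have "ASF_computes 2 2 (\<lambda>p. [r * p ! 0, s * p ! 1])"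
    using r s unfolding ASF_scalar_def
    by (rule ASF_computes_par) (auto simp: numeral_2_eq_2 length_Suc_conv)
  then have "ASF_computes 2 1 (\<lambda>p. [r * p ! 0 + s * p ! 1])"
    by (rule ASF_computes_seq[OF _ ASF_computes_basic(5)]) simp
  then show ?thesis unfolding ASF_scalar_def
    by (rule ASF_computes_seq[OF ASF_computes_basic(1)]) (simp add: algebra_simps)
qed

lemma ASF_scalar_feedback:
  assumes "r \<in> RatF" and r: "ASF_scalar r"
  shows "ASF_scalar (inverse (1 - kX * r))"
proof -
  define D where "D = inverse (1 - kX * r)"
  have D: "(1 - kX * r) * D = 1"
    unfolding D_def using one_minus_kX_mult_RatF(1)[OF \<open>r \<in> RatF\<close>] by simp
  have D_unfold: "u + r * (kX * D * u) = D * u" for u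
  proof -
    have "D * u = (1 - kX * r) * D * u + r * (kX * D * u)" by (simp add: algebra_simps)
    then show ?thesis using D by simp
  qed
  have "ASF_computes 2 2 (\<lambda>p. [p ! 0, r * p ! 1])"
    using ASF_computes_basic(8) r unfolding ASF_scalar_def
    by (rule ASF_computes_par) (auto simp: numeral_2_eq_2 length_Suc_conv)
  then have "ASF_computes 2 1 (\<lambda>p. [p ! 0 + r * p ! 1])"
    by (rule ASF_computes_seq[OF _ ASF_computes_basic(5)]) simp
  then have "ASF_computes 2 2 (\<lambda>p. [p ! 0 + r * p ! 1, p ! 0 + r * p ! 1])"
    by (rule ASF_computes_seq[OF _ ASF_computes_basic(1)]) simp
  from this[folded Suc_1] show ?thesis
    unfolding ASF_scalar_def D_def[symmetric]
  proof (rule ASF_computes_feedback[where Z = "\<lambda>a. kX * D * a ! 0"])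
    fix a :: "'a kx list" and z assume "length a = 1"
    then show "z = last [(a @ [z]) ! 0 + r * (a @ [z]) ! 1, (a @ [z]) ! 0 + r * (a @ [z]) ! 1] * kX
        \<longleftrightarrow> z = kX * D * a ! 0"
      using feedback_equation_iff[OF \<open>r \<in> RatF\<close>] by (simp add: nth_append D_def)
    show "butlast [(a @ [kX * D * a ! 0]) ! 0 + r * (a @ [kX * D * a ! 0]) ! 1,
        (a @ [kX * D * a ! 0]) ! 0 + r * (a @ [kX * D * a ! 0]) ! 1] = [D * a ! 0]"
      using \<open>length a = 1\<close> by (simp add: nth_append D_unfold)
  qed
qed

lemma ASF_scalar_poly: "ASF_scalar (Fract p 1)"
proof (induct p)
  case 0
  have "Fract 0 1 = kconst 0" unfolding kconst_def by simp
  then show ?case using ASF_scalar_kconst by metis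
next
  case (pCons a p)
  then show ?case
    unfolding Fract_pCons by (intro ASF_scalar_add ASF_scalar_mult ASF_scalar_kconst ASF_scalar_kX)
qed

text \<open>Writing \<open>r = p/q\<close> with \<open>q = q\<^sub>0 + x t\<close> and \<open>q\<^sub>0 \<noteq> 0\<close>, we have
  \<open>q = q\<^sub>0 (1 - x \<rho>)\<close> for the polynomial \<open>\<rho> = -t/q\<^sub>0\<close>, so \<open>1/q\<close> is a feedback loop.\<close>
lemma ASF_scalar_RatF:
  assumes "r \<in> RatF"
  shows "ASF_scalar r"
proof -
  obtain p q where pq: "r = Fract p q" "coeff q 0 \<noteq> 0" "q \<noteq> 0"
    using assms by (rule RatF_E)
  obtain q0 t where q: "q = pCons q0 t" by (cases q)
  with pq have "q0 \<noteq> 0" by simp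
  define \<rho> where "\<rho> = kconst (- inverse q0) * Fract t 1"
  have \<rho>: "\<rho> \<in> RatF" "ASF_scalar \<rho>"
    unfolding \<rho>_def
    by (intro RatF_mult RatF_kconst RatF_poly ASF_scalar_mult ASF_scalar_kconst ASF_scalar_poly)+
  have "kconst q0 * (1 - kX * \<rho>) = kconst q0 + kX * Fract t 1 * (kconst q0 * kconst (inverse q0))"
    unfolding \<rho>_def kconst_uminus by (simp add: algebra_simps)
  also have "\<dots> = Fract q 1"
    unfolding kconst_mult q Fract_pCons using \<open>q0 \<noteq> 0\<close> by (simp add: kconst_1)
  finally have q_factor: "Fract q 1 = kconst q0 * (1 - kX * \<rho>)" ..
  have "r = Fract p 1 * inverse (Fract q 1)"
    unfolding pq by simp
  also have "\<dots> = Fract p 1 * (kconst (inverse q0) * inverse (1 - kX * \<rho>))"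
    unfolding q_factor inverse_mult_distrib kconst_inverse ..
  finally show ?thesis
    by (simp only:) (intro ASF_scalar_mult ASF_scalar_poly ASF_scalar_kconst ASF_scalar_feedback \<rho>)
qed

lemma ASF_computes_form:
  assumes "\<forall>j<a. c j \<in> RatF" "d \<in> RatF"
  shows "ASF_computes a 1 (\<lambda>p. [(\<Sum>j<a. c j * p ! j) + d])"
  using assms(1)
proof (induct a arbitrary: c)
  case 0
  from ASF_scalar_RatF[OF assms(2)] have "ASF_computes 0 1 (\<lambda>p. [d])"
    unfolding ASF_scalar_def by (rule ASF_computes_seq[OF ASF_computes_basic(6)]) simp
  then show ?case by simp
next
  case (Suc a)
  from Suc.prems have "ASF_scalar (c 0)" by (simp add: ASF_scalar_RatF)
  moreover from Suc have "ASF_computes a 1 (\<lambda>p. [(\<Sum>j<a. c (Suc j) * p ! j) + d])" by simp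
  ultimately have "ASF_computes (Suc a) 2 (\<lambda>p. [c 0 * p ! 0, (\<Sum>j<a. c (Suc j) * p ! Suc j) + d])"
    unfolding ASF_scalar_def by (rule ASF_computes_par) (auto simp: length_Suc_conv)
  then show ?case
    by (rule ASF_computes_seq[OF _ ASF_computes_basic(5)])
      (simp del: sum.lessThan_Suc add: sum.lessThan_Suc_shift)
qed

lemma ASF_computes_discard: "ASF_computes a 0 (\<lambda>p. [])"
proof (induct a)
  case 0
  show ?case by (rule ASF_computes_basic)
next
  case (Suc a)
  show ?case by (rule ASF_computes_par[OF ASF_computes_basic(2) Suc]) simp_all
qed

lemma ASF_computes_rotate: "ASF_computes (Suc a) (Suc a) (\<lambda>p :: 'k::field kx list. tl p @ [hd p])"
proof (induct a)
  case 0
  show ?case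
    by (rule ASF_computes_cong[OF ASF_computes_basic(8)[unfolded One_nat_def]]) (auto simp: length_Suc_conv)
next
  case (Suc a)
  have "ASF_computes (Suc (Suc a)) (Suc (Suc a)) (\<lambda>p :: 'k kx list. hd (tl p) # hd p # tl (tl p))"
    by (rule ASF_computes_par[OF ASF_computes_basic(9) ASF_computes_ids]) (auto simp: length_Suc_conv)
  moreover have
    "ASF_computes (Suc (Suc a)) (Suc (Suc a)) (\<lambda>p :: 'k kx list. hd p # tl (tl p) @ [hd (tl p)])"
    by (rule ASF_computes_par[OF ASF_computes_basic(8) Suc]) (auto simp: length_Suc_conv)
  ultimately show ?case
    by (rule ASF_computes_seq) (auto simp: length_Suc_conv)
qed

lemma ASF_computes_copy: "ASF_computes a (a + a) (\<lambda>p :: 'k::field kx list. p @ p)"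
proof (induct a)
  case 0
  have "ASF_computes 0 0 (\<lambda>p :: 'k kx list. p @ p)"
    by (rule ASF_computes_cong[OF ASF_computes_basic(7)]) simp
  then show ?case by simp
next
  case (Suc a)
  \<comment> \<open>\<open>x # r \<mapsto> x # x # r @ r\<close>, then rotate the second \<open>x\<close> past the first copy of \<open>r\<close>\<close>
  have "ASF_computes (Suc a) (Suc (Suc (a + a))) (\<lambda>p :: 'k kx list. hd p # hd p # tl p @ tl p)"
    by (rule ASF_computes_par[OF ASF_computes_basic(1) Suc]) (auto simp: length_Suc_conv)
  moreover have "ASF_computes (Suc (a + a)) (Suc (a + a))
      (\<lambda>p :: 'k kx list. tl (take (Suc a) p) @ hd p # drop (Suc a) p)"
    by (rule ASF_computes_par[OF ASF_computes_rotate ASF_computes_ids]) (auto simp: hd_take)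
  then have "ASF_computes (Suc (Suc (a + a))) (Suc (Suc (a + a)))
      (\<lambda>p :: 'k kx list. hd p # tl (take (Suc a) (tl p)) @ hd (tl p) # drop (Suc a) (tl p))"
    by (rule ASF_computes_par[OF ASF_computes_basic(8)]) (auto simp: length_Suc_conv)
  ultimately have "ASF_computes (Suc a) (Suc (Suc (a + a))) (\<lambda>p :: 'k kx list. p @ p)"
    by (rule ASF_computes_seq) (auto simp: length_Suc_conv)
  then show ?case by simp
qed

lemma affine_map_Suc:
  "affine_map a (Suc b) A b0 p =
     ((\<Sum>j<a. A 0 j * p ! j) + b0 0) # affine_map a b (\<lambda>i. A (Suc i)) (\<lambda>i. b0 (Suc i)) p"
  unfolding affine_map_def by (simp del: upt_Suc add: map_upt_Suc)

lemma ASF_computes_affine_map: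
  assumes "rational_affine a b A b0"
  shows "ASF_computes a b (affine_map a b A b0)"
  using assms
proof (induct b arbitrary: A b0)
  case 0
  show ?case by (rule ASF_computes_cong[OF ASF_computes_discard]) (simp add: affine_map_def)
next
  case (Suc b)
  from Suc.prems have "\<forall>j<a. A 0 j \<in> RatF" "b0 0 \<in> RatF"
    unfolding rational_affine_def by auto
  then have "ASF_computes a 1 (\<lambda>p. [(\<Sum>j<a. A 0 j * p ! j) + b0 0])"
    by (rule ASF_computes_form)
  moreover from Suc.prems have "rational_affine a b (\<lambda>i. A (Suc i)) (\<lambda>i. b0 (Suc i))"
    unfolding rational_affine_def by auto
  then have "ASF_computes a b (affine_map a b (\<lambda>i. A (Suc i)) (\<lambda>i. b0 (Suc i)))"
    by (rule Suc.hyps)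
  ultimately have "ASF_computes (a + a) (Suc b)
      (\<lambda>p. ((\<Sum>j<a. A 0 j * take a p ! j) + b0 0) #
        affine_map a b (\<lambda>i. A (Suc i)) (\<lambda>i. b0 (Suc i)) (drop a p))"
    by (rule ASF_computes_par) simp_all
  then show ?case
    by (rule ASF_computes_seq[OF ASF_computes_copy]) (simp add: affine_map_Suc)
qed

section \<open>Realisability\<close>

theorem ASF_denotation_iff_rational_affine:
  "(\<exists>d\<in>ASF. sort_of d = Some (a, b) \<and> den d = R) \<longleftrightarrow>
   (\<exists>A b0. rational_affine a b A b0 \<and> R = {(p, affine_map a b A b0 p) | p. length p = a})"
proof
  assume "\<exists>d\<in>ASF. sort_of d = Some (a, b) \<and> den d = R"
  then have "rat_affine_rel a b R" using ASF_den_rat_affine_rel by blast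
  then obtain F where F: "rat_affine_fun a b F" and R: "R = graph_of a F"
    unfolding rat_affine_rel_def by blast
  obtain A b0 where "rational_affine a b A b0" "\<And>p. length p = a \<Longrightarrow> F p = affine_map a b A b0 p"
    using rat_affine_fun_affine_map[OF F] by blast
  moreover from this(2) have "R = graph_of a (affine_map a b A b0)"
    unfolding R by (rule graph_of_cong)
  ultimately show "\<exists>A b0. rational_affine a b A b0 \<and> R = {(p, affine_map a b A b0 p) | p. length p = a}"
    unfolding graph_of_def by blast
next
  assume "\<exists>A b0. rational_affine a b A b0 \<and> R = {(p, affine_map a b A b0 p) | p. length p = a}"
  then show "\<exists>d\<in>ASF. sort_of d = Some (a, b) \<and> den d = R"
    using ASF_computes_affine_map unfolding ASF_computes_def graph_of_def by blast
qed

theorem theorem5: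
  fixes c :: "'k::field circ"
  assumes "c \<in> ACirc"
  shows "realisable c \<longleftrightarrow>
    (\<exists>n m. sort_of c = Some (n, m) \<and>
      (\<exists>I. I \<subseteq> set (port_list n m) \<and>
        (\<exists>A b0. rational_affine (length (in_ports n m I)) (length (out_ports n m I)) A b0 \<and>
           rewire_den c n m I =
             {(p, affine_map (length (in_ports n m I)) (length (out_ports n m I)) A b0 p) | p.
                length p = length (in_ports n m I)})))"
  \<comment> \<open>both sides already require \<open>sort_of c \<noteq> None\<close>\<close>
  unfolding realisable_def ASF_denotation_iff_rational_affine ..

end
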